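(* Let $A$ be an injective compact self-adjoint operator with simple spectrum on a separable Hilbert space $H$, and suppose there are $x,y\in H$ such that $Vu=Au+\langle u,x\rangle y$ ($u\in H$) is quasi-nilpotent, with $y\notin\operatorname{Ran}(A)$. Define $\mathscr{D}(D)=\operatorname{Ran}(A)+\mathbb{C}y$ and $D(Au+cy)=u$ for $u\in H$, $c\in\mathbb{C}$. Then $(D,V)$ is an admissible pair.
   Context: A pair $(D,V)$ of operators on a separable Hilbert space $H$ is called admissible if: (i) $D:\mathscr{D}(D)\subset H\to H$ is a densely defined closed linear operator; (ii) $\dim\ker D=1$; (iii) $D$ has a self-adjoint restriction with compact resolvent; (iv) $V:H\to H$ is a compact operator with $\sigma(V)=\{0\}$; (v) $\operatorname{Ran}V\subset\mathscr{D}(D)$ and $DV=I$. *)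

theory Defs
  imports "HOL-Analysis.Analysis"
begin

class complex_inner = real_normed_vector +
  fixes scaleC :: "complex \<Rightarrow> 'a \<Rightarrow> 'a" (infixr "*\<^sub>C" 75)
    and cinner :: "'a \<Rightarrow> 'a \<Rightarrow> complex"
  assumes scaleC_add_right: "a *\<^sub>C (x + y) = a *\<^sub>C x + a *\<^sub>C y"
    and scaleC_add_left: "(a + b) *\<^sub>C x = a *\<^sub>C x + b *\<^sub>C x"
    and scaleC_scaleC: "a *\<^sub>C (b *\<^sub>C x) = (a * b) *\<^sub>C x"
    and scaleC_one: "1 *\<^sub>C x = x"
    and scaleR_scaleC: "scaleR r x = complex_of_real r *\<^sub>C x"
    and cinner_add_left: "cinner (x + y) z = cinner x z + cinner y z"
    and cinner_scaleC_left: "cinner (a *\<^sub>C x) y = a * cinner x y"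
    and cinner_commute: "cinner y x = cnj (cinner x y)"
    and cinner_self_nonneg: "0 \<le> Re (cinner x x)"
    and cinner_eq_zero_iff: "cinner x x = 0 \<longleftrightarrow> x = 0"
    and norm_eq_sqrt_cinner: "norm x = sqrt (Re (cinner x x))"

class chilbert = complex_inner + complete_space

definition csubspace :: "'a::complex_inner set \<Rightarrow> bool" where
  "csubspace S \<longleftrightarrow> 0 \<in> S \<and> (\<forall>x\<in>S. \<forall>y\<in>S. x + y \<in> S) \<and> (\<forall>c. \<forall>x\<in>S. c *\<^sub>C x \<in> S)"

definition clinear_on :: "'a::complex_inner set \<Rightarrow> ('a \<Rightarrow> 'a) \<Rightarrow> bool" where
  "clinear_on S T \<longleftrightarrow> csubspace S \<and>
     (\<forall>x\<in>S. \<forall>y\<in>S. T (x + y) = T x + T y) \<and> (\<forall>c. \<forall>x\<in>S. T (c *\<^sub>C x) = c *\<^sub>C T x)"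

definition clinear :: "('a::complex_inner \<Rightarrow> 'a) \<Rightarrow> bool" where
  "clinear T \<longleftrightarrow> (\<forall>x y. T (x + y) = T x + T y) \<and> (\<forall>c x. T (c *\<^sub>C x) = c *\<^sub>C T x)"

definition bounded_clinear :: "('a::complex_inner \<Rightarrow> 'a) \<Rightarrow> bool" where
  "bounded_clinear T \<longleftrightarrow> clinear T \<and> (\<exists>K. \<forall>x. norm (T x) \<le> norm x * K)"

definition compact_op :: "('a::complex_inner \<Rightarrow> 'a) \<Rightarrow> bool" where
  "compact_op T \<longleftrightarrow> clinear T \<and> compact (closure (T ` ball 0 1))"

definition self_adjoint_bdd :: "('a::complex_inner \<Rightarrow> 'a) \<Rightarrow> bool" where
  "self_adjoint_bdd T \<longleftrightarrow> bounded_clinear T \<and> (\<forall>x y. cinner (T x) y = cinner x (T y))"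

definition spectrum :: "('a::complex_inner \<Rightarrow> 'a) \<Rightarrow> complex set" where
  "spectrum T = {l. \<not> (\<exists>S. bounded_clinear S \<and> (\<forall>x. S (T x - l *\<^sub>C x) = x)
                                   \<and> (\<forall>x. T (S x) - l *\<^sub>C S x = x))}"

definition quasi_nilpotent :: "('a::complex_inner \<Rightarrow> 'a) \<Rightarrow> bool" where
  "quasi_nilpotent T \<longleftrightarrow> bounded_clinear T \<and> spectrum T = {0}"

definition simple_spectrum :: "('a::complex_inner \<Rightarrow> 'a) \<Rightarrow> bool" where
  "simple_spectrum T \<longleftrightarrow>
     (\<forall>l u v. T u = l *\<^sub>C u \<and> T v = l *\<^sub>C v \<and> v \<noteq> 0 \<longrightarrow> (\<exists>c. u = c *\<^sub>C v))"

definition separable_space :: "'a::complex_inner itself \<Rightarrow> bool" where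
  "separable_space _ \<longleftrightarrow> (\<exists>S::'a set. countable S \<and> closure S = UNIV)"

definition densely_defined :: "'a::complex_inner set \<Rightarrow> ('a \<Rightarrow> 'a) \<Rightarrow> bool" where
  "densely_defined Dom T \<longleftrightarrow> clinear_on Dom T \<and> closure Dom = UNIV"

definition closed_op :: "'a::complex_inner set \<Rightarrow> ('a \<Rightarrow> 'a) \<Rightarrow> bool" where
  "closed_op Dom T \<longleftrightarrow> closed {(x, T x) | x. x \<in> Dom}"

definition op_kernel :: "'a::complex_inner set \<Rightarrow> ('a \<Rightarrow> 'a) \<Rightarrow> 'a set" where
  "op_kernel Dom T = {x \<in> Dom. T x = 0}"

definition dim_one :: "'a::complex_inner set \<Rightarrow> bool" where
  "dim_one S \<longleftrightarrow> (\<exists>e. e \<noteq> 0 \<and> S = {c *\<^sub>C e | c. True})"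

definition adjoint_dom :: "'a::complex_inner set \<Rightarrow> ('a \<Rightarrow> 'a) \<Rightarrow> 'a set" where
  "adjoint_dom Dom T = {y. \<exists>z. \<forall>x\<in>Dom. cinner (T x) y = cinner x z}"

definition self_adjoint_op :: "'a::complex_inner set \<Rightarrow> ('a \<Rightarrow> 'a) \<Rightarrow> bool" where
  "self_adjoint_op Dom T \<longleftrightarrow> densely_defined Dom T
     \<and> (\<forall>x\<in>Dom. \<forall>y\<in>Dom. cinner (T x) y = cinner x (T y))
     \<and> adjoint_dom Dom T = Dom"

definition compact_resolvent :: "'a::complex_inner set \<Rightarrow> ('a \<Rightarrow> 'a) \<Rightarrow> bool" where
  "compact_resolvent Dom T \<longleftrightarrow> (\<exists>l R. compact_op R
      \<and> (\<forall>x. R x \<in> Dom \<and> T (R x) - l *\<^sub>C R x = x)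
      \<and> (\<forall>x\<in>Dom. R (T x - l *\<^sub>C x) = x))"

definition admissible :: "'a::complex_inner set \<Rightarrow> ('a \<Rightarrow> 'a) \<Rightarrow> ('a \<Rightarrow> 'a) \<Rightarrow> bool" where
  "admissible DomD D V \<longleftrightarrow>
     densely_defined DomD D \<and> closed_op DomD D
   \<and> dim_one (op_kernel DomD D)
   \<and> (\<exists>Dom0 \<subseteq> DomD. self_adjoint_op Dom0 D \<and> compact_resolvent Dom0 D)
   \<and> compact_op V \<and> spectrum V = {0}
   \<and> (\<forall>u. V u \<in> DomD) \<and> (\<forall>u. D (V u) = u)"

end

theory Submission
  imports Defs
begin

text \<open>Since \<open>A\<close> is self-adjoint and injective, the orthogonal complement of its range is
  \<open>ker A = 0\<close>, so the range is dense; the orthogonal complement is reached through the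
  nearest-point projection onto the closure of the range. On \<open>Ran A\<close> the operator \<open>D\<close> is
  \<open>A\<^sup>-\<^sup>1\<close>, which is self-adjoint and has the compact resolvent \<open>A\<close> at \<open>0\<close>. The graph of \<open>D\<close> is
  the preimage of the closed line \<open>\<complex>y\<close> under \<open>(a, u) \<mapsto> a - Au\<close>, hence closed, and its
  kernel is \<open>\<complex>y\<close>. Finally \<open>V\<close> is compact as a rank-one perturbation of \<open>A\<close>.\<close>

lemma scaleC_zero_left [simp]: "0 *\<^sub>C (x::'a::complex_inner) = 0"
  using scaleR_scaleC[of 0 x] by simp

lemma scaleC_zero_right [simp]: "c *\<^sub>C (0::'a::complex_inner) = 0"
  using scaleC_add_right[of c 0 0] by simp

lemma cinner_zero_left [simp]: "cinner 0 y = 0"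
  using cinner_add_left[of 0 0 y] by simp

lemma cinner_add_right: "cinner x (y + z) = cinner x y + cinner x z"
  by (metis cinner_add_left cinner_commute complex_cnj_add)

lemma cinner_scaleC_right: "cinner x (c *\<^sub>C y) = cnj c * cinner x y"
  by (metis cinner_commute cinner_scaleC_left complex_cnj_mult)

lemma cinner_zero_right [simp]: "cinner x 0 = 0"
  using cinner_add_right[of x 0 0] by simp

lemma cinner_minus_left: "cinner (- x) y = - cinner x y"
  using cinner_add_left[of "-x" x y] by (simp add: eq_neg_iff_add_eq_0)

lemma cinner_minus_right: "cinner x (- y) = - cinner x y"
  using cinner_add_right[of x "-y" y] by (simp add: eq_neg_iff_add_eq_0)

lemma cinner_diff_left: "cinner (x - y) z = cinner x z - cinner y z"
  using cinner_add_left[of x "-y" z] by (simp add: cinner_minus_left)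

lemma cinner_diff_right: "cinner x (y - z) = cinner x y - cinner x z"
  using cinner_add_right[of x y "-z"] by (simp add: cinner_minus_right)

lemma power2_norm_eq_cinner: "(norm (x::'a::complex_inner))\<^sup>2 = Re (cinner x x)"
  using norm_eq_sqrt_cinner[of x] cinner_self_nonneg[of x] by simp

lemma Re_cinner_commute: "Re (cinner y x) = Re (cinner x y)"
  by (subst cinner_commute) simp

lemma norm_scaleC: "norm (c *\<^sub>C x) = cmod c * norm x"
proof -
  have "cinner (c *\<^sub>C x) (c *\<^sub>C x) = complex_of_real ((cmod c)\<^sup>2) * cinner x x"
    by (simp add: cinner_scaleC_left cinner_scaleC_right mult.assoc[symmetric] mult.commute[of "cnj c"]
        flip: complex_norm_square)
  then show ?thesis
    by (simp add: norm_eq_sqrt_cinner real_sqrt_mult)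
qed

lemma power2_norm_add:
  "(norm (a + b))\<^sup>2 = (norm a)\<^sup>2 + (norm b)\<^sup>2 + 2 * Re (cinner a b)"
  by (simp add: power2_norm_eq_cinner cinner_add_left cinner_add_right Re_cinner_commute[of b a])

lemma power2_norm_diff:
  "(norm (a - b))\<^sup>2 = (norm a)\<^sup>2 + (norm b)\<^sup>2 - 2 * Re (cinner a b)"
  by (simp add: power2_norm_eq_cinner cinner_diff_left cinner_diff_right Re_cinner_commute[of b a])

lemma parallelogram_law:
  fixes a b :: "'a::complex_inner"
  shows "(norm (a + b))\<^sup>2 + (norm (a - b))\<^sup>2 = 2 * (norm a)\<^sup>2 + 2 * (norm b)\<^sup>2"
  using power2_norm_add[of a b] power2_norm_diff[of a b] by simp

lemma bounded_clinear_bounded_linear: "bounded_clinear T \<Longrightarrow> bounded_linear T"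
  unfolding bounded_clinear_def clinear_def
  by (auto intro!: bounded_linear_intro simp: scaleR_scaleC)

lemma bounded_linear_scaleC_left: "bounded_linear (\<lambda>c::complex. c *\<^sub>C (y::'a::complex_inner))"
  by (rule bounded_linear_intro[where K="norm y"])
     (auto simp: scaleC_add_left scaleR_scaleC scaleC_scaleC norm_scaleC scaleR_conv_of_real)

lemma Re_cinner_scaleR_right: "Re (cinner x (t *\<^sub>R y)) = t * Re (cinner x y)"
  by (simp add: scaleR_scaleC cinner_scaleC_right)

lemma closed_range_scaleC: "closed (range (\<lambda>c. c *\<^sub>C (y::'a::complex_inner)))"
proof (cases "y = 0")
  case True
  then have "range (\<lambda>c. c *\<^sub>C y) = {0}" by auto
  then show ?thesis by simp
next
  case False
  have "complete (range (\<lambda>c. c *\<^sub>C y))"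
    using False by (intro complete_isometric_image[where e = "norm y"] bounded_linear_scaleC_left)
      (auto simp: norm_scaleC complete_UNIV)
  then show ?thesis by (rule complete_imp_closed)
qed

lemma Cauchy_by_null_bound:
  fixes m :: "nat \<Rightarrow> 'a::metric_space"
  assumes e: "e \<longlonglongrightarrow> 0" and bound: "\<And>i j. dist (m i) (m j) \<le> e i + e j"
  shows "Cauchy m"
proof (rule metric_CauchyI)
  fix r :: real assume "0 < r"
  then obtain N where N: "\<And>n. n \<ge> N \<Longrightarrow> dist (e n) 0 < r / 2"
    using e unfolding lim_sequentially by (meson half_gt_zero)
  show "\<exists>M. \<forall>i\<ge>M. \<forall>j\<ge>M. dist (m i) (m j) < r"
  proof (intro exI allI impI)
    fix i j assume "N \<le> i" "N \<le> j"
    then have "\<bar>e i\<bar> < r / 2" "\<bar>e j\<bar> < r / 2" using N by (auto simp: dist_real_def)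
    then show "dist (m i) (m j) < r" using bound[of i j] by linarith
  qed
qed

lemma dist_almost_nearest_points:
  fixes z a b :: "'a::complex_inner"
  assumes "(dist z a)\<^sup>2 \<le> d\<^sup>2 + \<alpha>" "(dist z b)\<^sup>2 \<le> d\<^sup>2 + \<beta>"
    and "d \<le> dist z ((1/2) *\<^sub>R (a + b))" "0 \<le> d"
  shows "(dist a b)\<^sup>2 \<le> 2 * \<alpha> + 2 * \<beta>"
proof -
  have "z - a + (z - b) = 2 *\<^sub>R (z - (1/2) *\<^sub>R (a + b))"
    by (simp add: algebra_simps scaleR_2)
  then have "2 * d \<le> norm (z - a + (z - b))"
    using assms(3) by (simp add: dist_norm)
  then have "(2 * d)\<^sup>2 \<le> (norm (z - a + (z - b)))\<^sup>2"
    using assms(4) by (intro power_mono) auto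
  with parallelogram_law[of "z - a" "z - b"] assms(1,2) show ?thesis
    by (simp add: dist_norm power_mult_distrib norm_minus_commute)
qed

lemma exists_nearest_point:
  fixes C :: "'a::chilbert set"
  assumes "closed C" "convex C" "C \<noteq> {}"
  shows "\<exists>p\<in>C. \<forall>q\<in>C. dist z p \<le> dist z q"
proof -
  define d where "d = infdist z C"
  have d0: "0 \<le> d" and lb: "\<And>q. q \<in> C \<Longrightarrow> d \<le> dist z q"
    by (simp_all add: d_def infdist_nonneg infdist_le)
  have "\<exists>q\<in>C. (dist z q)\<^sup>2 < d\<^sup>2 + e\<^sup>2" if "e > 0" for e
  proof -
    have "d < sqrt (d\<^sup>2 + e\<^sup>2)"
      using that d0 by (intro real_less_rsqrt) simp
    then obtain q where "q \<in> C" "dist z q < sqrt (d\<^sup>2 + e\<^sup>2)"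
      using assms(3) by (auto simp: d_def infdist_notempty cINF_less_iff intro: bdd_belowI[where m=0])
    moreover have "(dist z q)\<^sup>2 < (sqrt (d\<^sup>2 + e\<^sup>2))\<^sup>2"
      using calculation by (intro power_strict_mono) auto
    ultimately show ?thesis by auto
  qed
  then have "\<forall>n. \<exists>q\<in>C. (dist z q)\<^sup>2 < d\<^sup>2 + (inverse (Suc n))\<^sup>2"
    by simp
  then obtain m where m: "\<And>n. m n \<in> C" "\<And>n. (dist z (m n))\<^sup>2 < d\<^sup>2 + (inverse (Suc n))\<^sup>2"
    by metis
  have "dist (m i) (m j) \<le> 2 * inverse (Suc i) + 2 * inverse (Suc j)" for i j
  proof -
    have "(1/2) *\<^sub>R (m i + m j) \<in> C"
      using convexD[OF assms(2) m(1) m(1), of "1/2" "1/2"] by (simp add: scaleR_add_right)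
    then have "(dist (m i) (m j))\<^sup>2 \<le> 2 * (inverse (Suc i))\<^sup>2 + 2 * (inverse (Suc j))\<^sup>2"
      using m(2)[of i] m(2)[of j] lb d0 by (intro dist_almost_nearest_points) auto
    also have "\<dots> \<le> (2 * inverse (Suc i) + 2 * inverse (Suc j))\<^sup>2"
      by (simp add: power2_eq_square algebra_simps)
    finally show ?thesis
      by (rule power2_le_imp_le) simp
  qed
  moreover have "(\<lambda>n. 2 * inverse (real (Suc n))) \<longlonglongrightarrow> 0"
    using tendsto_mult_right_zero[OF LIMSEQ_inverse_real_of_nat] .
  ultimately have "Cauchy m"
    by (rule Cauchy_by_null_bound[rotated])
  then obtain p where p: "m \<longlonglongrightarrow> p"
    using Cauchy_convergent_iff convergent_def by blast
  have "p \<in> C"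
    using closed_sequentially[OF assms(1)] m(1) p by blast
  moreover have "(dist z p)\<^sup>2 \<le> d\<^sup>2"
  proof (rule LIMSEQ_le)
    show "(\<lambda>n. (dist z (m n))\<^sup>2) \<longlonglongrightarrow> (dist z p)\<^sup>2"
      using p by (intro tendsto_intros)
    show "(\<lambda>n. d\<^sup>2 + (inverse (Suc n))\<^sup>2) \<longlonglongrightarrow> d\<^sup>2"
      using tendsto_add[OF tendsto_const tendsto_power[OF LIMSEQ_inverse_real_of_nat, of 2]] by simp
    show "\<exists>N. \<forall>n\<ge>N. (dist z (m n))\<^sup>2 \<le> d\<^sup>2 + (inverse (Suc n))\<^sup>2"
      using m(2) less_imp_le by blast
  qed
  then have "dist z p \<le> d"
    using d0 by (rule power2_le_imp_le)
  ultimately show ?thesis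
    using lb by force
qed

lemma nearest_point_orthogonal:
  fixes z p w :: "'a::complex_inner"
  assumes near: "\<And>t::real. dist z p \<le> dist z (p + t *\<^sub>R w)"
  shows "Re (cinner (z - p) w) = 0"
proof -
  define r where "r = Re (cinner (z - p) w)"
  define q where "q = (norm w)\<^sup>2"
  have var: "2 * t * r \<le> t\<^sup>2 * q" for t
  proof -
    have "(norm (z - p))\<^sup>2 \<le> (norm (z - p - t *\<^sub>R w))\<^sup>2"
      using near[of t] by (intro power_mono) (auto simp: dist_norm diff_diff_add)
    also have "\<dots> = (norm (z - p))\<^sup>2 + t\<^sup>2 * q - 2 * (t * r)"
      unfolding power2_norm_diff q_def r_def by (simp add: Re_cinner_scaleR_right power_mult_distrib)
    finally show ?thesis by simp
  qed
  show ?thesis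
  proof (cases "w = 0")
    case False
    then have q: "q > 0" unfolding q_def by simp
    have "2 * (r / q) * r \<le> (r / q)\<^sup>2 * q" by (rule var)
    then have "r\<^sup>2 \<le> 0" using q by (simp add: power2_eq_square field_simps)
    then show ?thesis unfolding r_def by simp
  qed simp
qed

lemma dense_if_orthogonal_complement_zero:
  fixes S :: "'a::chilbert set"
  assumes S: "subspace S" and perp: "\<And>e. (\<And>w. w \<in> S \<Longrightarrow> Re (cinner e w) = 0) \<Longrightarrow> e = 0"
  shows "closure S = UNIV"
proof -
  have "z \<in> closure S" for z
  proof -
    have "\<exists>p\<in>closure S. \<forall>q\<in>closure S. dist z p \<le> dist z q"
      using S by (intro exists_nearest_point) (auto simp: subspace_imp_convex dest: subspace_0)
    then obtain p where p: "p \<in> closure S" and near: "\<And>q. q \<in> closure S \<Longrightarrow> dist z p \<le> dist z q"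
      by blast
    have "p + t *\<^sub>R w \<in> closure S" if "w \<in> S" for t w
    proof -
      have "(\<lambda>q. q + t *\<^sub>R w) ` closure S \<subseteq> closure S"
        using S that by (intro image_closure_subset continuous_intros)
          (auto intro!: subsetD[OF closure_subset] subspace_add subspace_scale)
      then show ?thesis using p by blast
    qed
    then have "Re (cinner (z - p) w) = 0" if "w \<in> S" for w
      using near that by (intro nearest_point_orthogonal) blast
    then have "z - p = 0" by (rule perp)
    then show ?thesis using p by simp
  qed
  then show ?thesis by auto
qed

lemma self_adjoint_inj_dense_range:
  fixes A :: "'a::chilbert \<Rightarrow> 'a"
  assumes "self_adjoint_bdd A" "inj A"
  shows "closure (range A) = UNIV"
proof (rule dense_if_orthogonal_complement_zero)
  have A: "bounded_clinear A" and sym: "\<And>u v. cinner (A u) v = cinner u (A v)"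
    using assms(1) by (auto simp: self_adjoint_bdd_def)
  then have Asc: "\<And>c u. A (c *\<^sub>C u) = c *\<^sub>C A u"
    by (simp add: bounded_clinear_def clinear_def)
  show "subspace (range A)"
    using A bounded_clinear_bounded_linear bounded_linear.linear linear_subspace_image subspace_UNIV by blast
  fix e assume perp: "\<And>w. w \<in> range A \<Longrightarrow> Re (cinner e w) = 0"
  have "cinner e (A u) = 0" for u
  proof -
    have "Re (cinner e (A u)) = 0" "Re (cinner e (A (\<i> *\<^sub>C u))) = 0"
      using perp by auto
    then show ?thesis by (simp add: Asc cinner_scaleC_right complex_eq_iff)
  qed
  then have "cinner (A e) (A e) = 0" using sym by simp
  then have "A e = 0" by (simp add: cinner_eq_zero_iff)
  moreover have "A 0 = 0" using Asc[of 0 0] by simp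
  ultimately show "e = 0" using assms(2) by (metis injD)
qed

lemma clinear_on_inverse_plus_line:
  assumes A: "clinear A" and D: "\<And>u c. D (A u + c *\<^sub>C y) = u"
  shows "clinear_on {A u + c *\<^sub>C y | u c. True} D"
proof -
  have add: "(A u + c *\<^sub>C y) + (A v + d *\<^sub>C y) = A (u + v) + (c + d) *\<^sub>C y" for u v c d
    using A by (simp add: clinear_def scaleC_add_left algebra_simps)
  have scale: "k *\<^sub>C (A u + c *\<^sub>C y) = A (k *\<^sub>C u) + (k * c) *\<^sub>C y" for k u c
    using A by (simp add: clinear_def scaleC_add_right scaleC_scaleC)
  define Dom where "Dom = {A u + c *\<^sub>C y | u c. True}"
  show ?thesis
    unfolding clinear_on_def csubspace_def Dom_def[symmetric]
  proof (intro conjI ballI allI)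
    have "0 = A 0 + 0 *\<^sub>C y"
      using A scale[of 0 0 0] by simp
    then show "0 \<in> Dom" unfolding Dom_def by blast
  next
    fix a b assume "a \<in> Dom" "b \<in> Dom"
    then obtain u c v d where "a = A u + c *\<^sub>C y" "b = A v + d *\<^sub>C y"
      unfolding Dom_def by blast
    then show "a + b \<in> Dom" "D (a + b) = D a + D b"
      unfolding Dom_def using add D by auto
  next
    fix k a assume "a \<in> Dom"
    then obtain u c where "a = A u + c *\<^sub>C y"
      unfolding Dom_def by blast
    then show "k *\<^sub>C a \<in> Dom" "D (k *\<^sub>C a) = k *\<^sub>C D a"
      unfolding Dom_def using scale D by auto
  qed
qed

lemma range_subset_plus_line: "range A \<subseteq> {A u + c *\<^sub>C y | u c. True}"
proof (rule image_subsetI)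
  fix u
  have "A u = A u + 0 *\<^sub>C y" by simp
  then show "A u \<in> {A u + c *\<^sub>C y | u c. True}" by blast
qed

lemma densely_defined_inverse_plus_line:
  assumes A: "clinear A" and dense: "closure (range A) = UNIV"
    and D: "\<And>u c. D (A u + c *\<^sub>C y) = u"
  shows "densely_defined {A u + c *\<^sub>C y | u c. True} D"
  using closure_mono[OF range_subset_plus_line, of A y] clinear_on_inverse_plus_line[OF A D] dense
  unfolding densely_defined_def by blast

lemma closed_op_inverse_plus_line:
  assumes A: "bounded_linear A" and D: "\<And>u c. D (A u + c *\<^sub>C y) = u"
  shows "closed_op {A u + c *\<^sub>C y | u c. True} D"
proof -
  define Dom where "Dom = {A u + c *\<^sub>C y | u c. True}"
  have "{(a, D a) | a. a \<in> Dom} = (\<lambda>p. fst p - A (snd p)) -` range (\<lambda>c. c *\<^sub>C y)"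
  proof (intro set_eqI iffI)
    fix p assume "p \<in> {(a, D a) | a. a \<in> Dom}"
    then obtain u c where "p = (A u + c *\<^sub>C y, u)"
      unfolding Dom_def using D by blast
    then show "p \<in> (\<lambda>p. fst p - A (snd p)) -` range (\<lambda>c. c *\<^sub>C y)" by simp
  next
    fix p assume "p \<in> (\<lambda>p. fst p - A (snd p)) -` range (\<lambda>c. c *\<^sub>C y)"
    then obtain c where "fst p = A (snd p) + c *\<^sub>C y"
      by (auto simp: algebra_simps)
    then have "p = (A (snd p) + c *\<^sub>C y, D (A (snd p) + c *\<^sub>C y))"
      using D by (metis prod.collapse)
    then show "p \<in> {(a, D a) | a. a \<in> Dom}"
      unfolding Dom_def by blast
  qed
  moreover have "closed ((\<lambda>p. fst p - A (snd p)) -` range (\<lambda>c. c *\<^sub>C y))"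
    by (intro closed_vimage closed_range_scaleC continuous_on_diff continuous_on_fst
        bounded_linear.continuous_on[OF A] continuous_on_snd continuous_on_id)
  ultimately show ?thesis
    unfolding closed_op_def Dom_def by simp
qed

lemma op_kernel_inverse_plus_line:
  assumes A0: "A 0 = 0" and D: "\<And>u c. D (A u + c *\<^sub>C y) = u"
  shows "op_kernel {A u + c *\<^sub>C y | u c. True} D = {c *\<^sub>C y | c. True}"
proof (intro set_eqI iffI)
  fix a assume "a \<in> op_kernel {A u + c *\<^sub>C y | u c. True} D"
  then obtain u c where a: "a = A u + c *\<^sub>C y" "D a = 0"
    unfolding op_kernel_def by blast
  then have "u = 0" using D by simp
  then show "a \<in> {c *\<^sub>C y | c. True}" using a A0 by auto
next
  fix a assume "a \<in> {c *\<^sub>C y | c. True}"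
  then obtain c where a: "a = A 0 + c *\<^sub>C y" using A0 by auto
  then have "D a = 0" using D by simp
  with a show "a \<in> op_kernel {A u + c *\<^sub>C y | u c. True} D"
    unfolding op_kernel_def by blast
qed

lemma self_adjoint_op_inverse:
  assumes sa: "self_adjoint_bdd A" and dense: "closure (range A) = UNIV"
    and D: "\<And>u. D (A u) = u"
  shows "self_adjoint_op (range A) D"
proof -
  have sym: "\<And>u v. cinner (A u) v = cinner u (A v)" and A: "clinear A"
    using sa by (auto simp: self_adjoint_bdd_def bounded_clinear_def)
  have "clinear_on (range A) D"
    using clinear_on_inverse_plus_line[OF A, of D 0] D by (simp add: full_SetCompr_eq)
  moreover have "\<forall>a\<in>range A. \<forall>b\<in>range A. cinner (D a) b = cinner a (D b)"
    using D sym by auto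
  moreover have "adjoint_dom (range A) D \<subseteq> range A"
  proof
    fix b assume "b \<in> adjoint_dom (range A) D"
    then obtain z where z: "\<forall>a\<in>range A. cinner (D a) b = cinner a z"
      unfolding adjoint_dom_def by blast
    have "cinner u (b - A z) = 0" for u
      using z D sym by (simp add: cinner_diff_right)
    then have "b - A z = 0"
      using cinner_eq_zero_iff by blast
    then show "b \<in> range A" by (metis eq_iff_diff_eq_0 rangeI)
  qed
  moreover have "range A \<subseteq> adjoint_dom (range A) D"
  proof
    fix b assume "b \<in> range A"
    then obtain v where "b = A v" by blast
    then have "\<forall>a\<in>range A. cinner (D a) b = cinner a v"
      using D sym by auto
    then show "b \<in> adjoint_dom (range A) D"
      unfolding adjoint_dom_def by blast
  qed
  ultimately show ?thesis
    unfolding self_adjoint_op_def densely_defined_def using dense by blast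
qed

lemma compact_op_rank_one_perturbation:
  assumes A: "compact_op A" "bounded_clinear A" and V: "bounded_clinear V"
    and rank_one: "\<And>u. \<exists>c. V u = A u + c *\<^sub>C y"
  shows "compact_op V"
proof -
  obtain KA where KA: "\<And>u. norm (A u) \<le> norm u * KA"
    using A(2) unfolding bounded_clinear_def by blast
  obtain KV where KV: "\<And>u. norm (V u) \<le> norm u * KV"
    using V unfolding bounded_clinear_def by blast
  define B where "B = (\<bar>KA\<bar> + \<bar>KV\<bar>) / norm y"
  define T where "T = {a + b | a b. a \<in> closure (A ` ball 0 1) \<and> b \<in> (\<lambda>c. c *\<^sub>C y) ` cball 0 B}"
  have "V u \<in> T" if u: "u \<in> ball 0 1" for u
  proof -
    obtain c where c: "V u = A u + c *\<^sub>C y"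
      using rank_one by blast
    have "cmod c * norm y = norm (V u - A u)"
      by (simp add: c norm_scaleC)
    also have "\<dots> \<le> norm u * KV + norm u * KA"
      using KA[of u] KV[of u] norm_triangle_ineq4[of "V u" "A u"] by linarith
    also have "\<dots> \<le> \<bar>KA\<bar> + \<bar>KV\<bar>"
    proof -
      have "norm u * K \<le> \<bar>K\<bar>" for K
      proof -
        have "norm u * K \<le> norm u * \<bar>K\<bar>" by (intro mult_left_mono) auto
        also have "\<dots> \<le> 1 * \<bar>K\<bar>" using u by (intro mult_right_mono) auto
        finally show ?thesis by simp
      qed
      then show ?thesis using add_mono[of "norm u * KV" "\<bar>KV\<bar>" "norm u * KA" "\<bar>KA\<bar>"] by simp
    qed
    finally have bound: "cmod c * norm y \<le> \<bar>KA\<bar> + \<bar>KV\<bar>" .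
    have "c *\<^sub>C y \<in> (\<lambda>c. c *\<^sub>C y) ` cball 0 B"
    proof (cases "y = 0")
      case True
      then show ?thesis by (simp add: B_def image_iff)
    next
      case False
      then have "cmod c \<le> B"
        using bound by (simp add: B_def pos_le_divide_eq)
      then show ?thesis by auto
    qed
    moreover have "A u \<in> closure (A ` ball 0 1)"
      using u closure_subset[of "A ` ball 0 1"] by blast
    ultimately show ?thesis
      unfolding T_def c by blast
  qed
  moreover have "compact T"
    using A(1) unfolding T_def compact_op_def
    by (intro compact_sums compact_continuous_image compact_cball linear_continuous_on
        bounded_linear_scaleC_left) auto
  ultimately have "closure (V ` ball 0 1) \<subseteq> T"
    by (intro closure_minimal compact_imp_closed) auto
  then have "compact (closure (V ` ball 0 1))"
    using compact_Int_closed[OF \<open>compact T\<close>, of "closure (V ` ball 0 1)"]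
    by (simp add: Int_absorb1)
  then show ?thesis
    using V unfolding compact_op_def bounded_clinear_def by simp
qed

theorem proposition2p3:
  fixes A :: "'a::chilbert \<Rightarrow> 'a" and x y :: 'a and D :: "'a \<Rightarrow> 'a"
  assumes "separable_space TYPE('a)"
    and "compact_op A" and "self_adjoint_bdd A" and "inj A" and "simple_spectrum A"
    and "quasi_nilpotent (\<lambda>u. A u + cinner u x *\<^sub>C y)"
    and "y \<notin> range A"
    and "\<And>u c. D (A u + c *\<^sub>C y) = u"
  shows "admissible {A u + c *\<^sub>C y | u c. True} D (\<lambda>u. A u + cinner u x *\<^sub>C y)"
proof -
  have A: "bounded_clinear A"
    using assms(3) by (simp add: self_adjoint_bdd_def)
  then have A0: "A 0 = 0"
    by (intro linear_0 bounded_linear.linear bounded_clinear_bounded_linear)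
  have DA: "\<And>u. D (A u) = u"
    using assms(8)[of _ 0] by simp
  have dense: "closure (range A) = UNIV"
    using assms(3,4) by (rule self_adjoint_inj_dense_range)
  have "y \<noteq> 0"
    using assms(7) A0 by (metis rangeI)
  have V: "bounded_clinear (\<lambda>u. A u + cinner u x *\<^sub>C y)"
    "spectrum (\<lambda>u. A u + cinner u x *\<^sub>C y) = {0}"
    using assms(6) by (simp_all add: quasi_nilpotent_def)
  show ?thesis
    unfolding admissible_def
  proof (intro conjI allI)
    show "densely_defined {A u + c *\<^sub>C y | u c. True} D"
      using A dense assms(8) unfolding bounded_clinear_def by (blast intro: densely_defined_inverse_plus_line)
    show "closed_op {A u + c *\<^sub>C y | u c. True} D"
      using A assms(8) by (intro closed_op_inverse_plus_line bounded_clinear_bounded_linear)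
    show "dim_one (op_kernel {A u + c *\<^sub>C y | u c. True} D)"
      unfolding dim_one_def op_kernel_inverse_plus_line[OF A0 assms(8)] using \<open>y \<noteq> 0\<close> by blast
    have "compact_resolvent (range A) D"
      unfolding compact_resolvent_def using assms(2) DA by (intro exI[of _ 0] exI[of _ A]) simp
    then show "\<exists>Dom0\<subseteq>{A u + c *\<^sub>C y | u c. True}. self_adjoint_op Dom0 D \<and> compact_resolvent Dom0 D"
      using range_subset_plus_line self_adjoint_op_inverse[OF assms(3) dense DA] by blast
    show "compact_op (\<lambda>u. A u + cinner u x *\<^sub>C y)"
      by (rule compact_op_rank_one_perturbation[OF assms(2) A V(1)]) blast
    show "spectrum (\<lambda>u. A u + cinner u x *\<^sub>C y) = {0}"
      by (rule V(2))
    show "A u + cinner u x *\<^sub>C y \<in> {A u + c *\<^sub>C y | u c. True}" for u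
      by blast
    show "D (A u + cinner u x *\<^sub>C y) = u" for u
      by (rule assms(8))
  qed
qed

end
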